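(* Let $T\in\mathcal T_h^i$ be an interface element with plane $\tau(T)$, unit normal $\bar{\mathbf n}$ and point $F$ as in the context, and let $\beta^+\ge\beta^->0$. For every $p\in\mathbb Q_1$ there is exactly one $q\in\mathbb Q_1$ such that (i) $q=p$ on $\tau(T)$, (ii) $p$ and $q$ have the same coefficients of the monomials $xy,yz,xz,xyz$, and (iii) $\beta^-\nabla p(F)\cdot\bar{\mathbf n}=\beta^+\nabla q(F)\cdot\bar{\mathbf n}$. Consequently the operator $\mathcal C_T:\mathbb Q_1\to\mathbb Q_1$, $\mathcal C_T(p)=q$, is well defined, and it is bijective on $\mathbb Q_1$.
   Context: $\mathbb Q_1$ is the space of trilinear polynomials on $\mathbb R^3$, i.e. the span of $x^ay^bz^c$ with $a,b,c\in\{0,1\}$. $\Omega\subset\mathbb R^3$ is a bounded domain (a union of finitely many rectangular parallelepipeds) with a closed $C^2$ surface $\Gamma$ separating it into $\Omega^-$ and $\Omega^+$; $\beta$ equals the positive constant $\beta^\pm$ on $\Omega^\pm$, and it is assumed $\beta^+\ge\beta^-$. $\mathcal T_h$ is a Cartesian mesh by cubes of edge length $h$ such that $\Gamma$ meets every mesh edge in at most one point and the boundary of every mesh face in at most two points, with no vertex on $\Gamma$. For an interface element $T$ (i.e. $T\cap\Gamma\neq\emptyset$), $K_T$ is a triangle whose three vertices are points where $\Gamma$ meets edges of $T$, chosen by a fixed rule (Case 1, $\Gamma$ cuts 3 faces: the three points; Case 2, $\Gamma$ cuts 4 faces separating the endpoints of an edge $e$ from the other vertices: the three points farthest from $e$;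 Case 3, four points on four parallel edges: any three; Case 4, $\Gamma$ cuts 5 faces: the three points on three parallel edges; Case 5, $\Gamma$ cuts 6 faces: every other one of the six points, lying on three mutually orthogonal edges). $\tau(T)$ is the plane containing $K_T$, $\bar{\mathbf n}$ a unit normal of $\tau(T)$, and $F$ the centroid of $K_T$. *)

theory Defs
  imports "HOL-Analysis.Analysis"
begin

text \<open>An element of Q1 (trilinear polynomials on R^3) is represented by its
  coefficient family: the coefficient of x^a y^b z^c, a,b,c in {0,1}, is
  stored at index (a,b,c) with 0 = False, 1 = True.\<close>
type_synonym Q1 = "bool \<times> bool \<times> bool \<Rightarrow> real"

definition mono_pow :: "bool \<Rightarrow> real \<Rightarrow> real" where
  "mono_pow a t = (if a then t else 1)"

definition Q1_eval :: "Q1 \<Rightarrow> real^3 \<Rightarrow> real" where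
  "Q1_eval p v = (\<Sum>(a,b,c)\<in>UNIV. p (a,b,c) * mono_pow a (v$1) * mono_pow b (v$2) * mono_pow c (v$3))"

definition Q1_grad_dir :: "Q1 \<Rightarrow> real^3 \<Rightarrow> real^3 \<Rightarrow> real" where
  "Q1_grad_dir p F n = frechet_derivative (Q1_eval p) (at F) n"

definition CT_rel :: "real \<Rightarrow> real \<Rightarrow> (real^3) set \<Rightarrow> real^3 \<Rightarrow> real^3 \<Rightarrow> Q1 \<Rightarrow> Q1 \<Rightarrow> bool" where
  "CT_rel bm bp tau n F p q \<longleftrightarrow>
     (\<forall>v\<in>tau. Q1_eval q v = Q1_eval p v) \<and>
     q (True,True,False) = p (True,True,False) \<and>
     q (False,True,True) = p (False,True,True) \<and>
     q (True,False,True) = p (True,False,True) \<and>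
     q (True,True,True) = p (True,True,True) \<and>
     bm * Q1_grad_dir p F n = bp * Q1_grad_dir q F n"

end

theory Submission
  imports Defs "HOL-Analysis.Cross3"
begin

text \<open>Adding a multiple of the affine function \<open>v \<mapsto> n \<bullet> (v - A)\<close> to \<open>p\<close> changes neither
  its values on the plane nor its bilinear and trilinear coefficients, and shifts its normal
  derivative by a free amount, so (i)--(iii) have a solution \<open>q\<close>. The difference of two
  solutions is an affine function vanishing on the plane whose gradient is orthogonal to the
  plane's normal, hence zero. The relation is symmetric under exchanging \<open>p\<close>, \<open>q\<close> together
  with \<open>\<beta>\<^sup>-\<close>, \<open>\<beta>\<^sup>+\<close>, which makes \<open>\<C>\<^sub>T\<close> invertible.\<close>

lemma bij_The_if_ex1_both:
  assumes "\<And>x. \<exists>!y. R x y" and "\<And>y. \<exists>!x. R x y"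
  shows "bij (\<lambda>x. THE y. R x y)"
proof -
  have R_The: "R x (THE y. R x y)" for x
    using theI'[OF assms(1)] .
  have "inj (\<lambda>x. THE y. R x y)"
    by (rule injI) (metis R_The assms(2))
  moreover have "surj (\<lambda>x. THE y. R x y)"
    by (metis (no_types, lifting) R_The assms surjI)
  ultimately show ?thesis
    by (simp add: bij_def)
qed


lemma Q1_eval_expand: "Q1_eval p v =
  p (False,False,False) + p (True,False,False) * v$1 + p (False,True,False) * v$2 + p (False,False,True) * v$3
  + p (True,True,False) * v$1 * v$2 + p (False,True,True) * v$2 * v$3 + p (True,False,True) * v$1 * v$3
  + p (True,True,True) * v$1 * v$2 * v$3"
  unfolding Q1_eval_def mono_pow_def
  by (simp add: UNIV_bool UNIV_Times_UNIV[symmetric] sum.cartesian_product[symmetric] del: UNIV_Times_UNIV)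

lemma Q1_ext:
  fixes p q :: Q1
  assumes "p (False,False,False) = q (False,False,False)" "p (True,False,False) = q (True,False,False)"
    "p (False,True,False) = q (False,True,False)" "p (False,False,True) = q (False,False,True)"
    "p (True,True,False) = q (True,True,False)" "p (False,True,True) = q (False,True,True)"
    "p (True,False,True) = q (True,False,True)" "p (True,True,True) = q (True,True,True)"
  shows "p = q"
proof
  fix t :: "bool \<times> bool \<times> bool"
  obtain x y z where t: "t = (x,y,z)" by (cases t) auto
  show "p t = q t" unfolding t using assms by (cases x; cases y; cases z) auto
qed

lemma Q1_eval_add_scaled: "Q1_eval (\<lambda>t. p t + c * q t) v = Q1_eval p v + c * Q1_eval q v"
  unfolding Q1_eval_expand by (simp add: algebra_simps)

lemma has_derivative_vec_nth: "((\<lambda>x::real^'n. x$i) has_derivative (\<lambda>h. h$i)) F"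
  by (rule bounded_linear.has_derivative[OF bounded_linear_vec_nth has_derivative_ident])

lemma Q1_eval_differentiable: "Q1_eval p differentiable at x"
  unfolding Q1_eval_expand[abs_def]
  by (intro differentiable_add differentiable_mult differentiable_const
      differentiableI[OF has_derivative_vec_nth])

lemma Q1_has_derivative: "(Q1_eval p has_derivative (\<lambda>h. Q1_grad_dir p x h)) (at x)"
  unfolding Q1_grad_dir_def
  using Q1_eval_differentiable frechet_derivative_works by blast

lemma Q1_grad_dir_add_scaled:
  "Q1_grad_dir (\<lambda>t. p t + c * q t) x h = Q1_grad_dir p x h + c * Q1_grad_dir q x h"
proof -
  have "((\<lambda>v. Q1_eval p v + c * Q1_eval q v) has_derivative
        (\<lambda>h. Q1_grad_dir p x h + c * Q1_grad_dir q x h)) (at x)"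
    by (intro has_derivative_add has_derivative_mult_right Q1_has_derivative)
  then show ?thesis
    unfolding Q1_grad_dir_def Q1_eval_add_scaled[abs_def]
    by (simp add: frechet_derivative_at[symmetric])
qed


definition Q1_affine :: "real \<Rightarrow> real^3 \<Rightarrow> Q1" where
  "Q1_affine c w = (\<lambda>t. if t = (False,False,False) then c
     else if t = (True,False,False) then w$1
     else if t = (False,True,False) then w$2
     else if t = (False,False,True) then w$3 else 0)"

lemma Q1_eval_affine: "Q1_eval (Q1_affine c w) v = c + w \<bullet> v"
  unfolding Q1_eval_expand Q1_affine_def by (simp add: inner_vec_def sum_3)

lemma Q1_grad_dir_affine: "Q1_grad_dir (Q1_affine c w) x h = w \<bullet> h"
proof -
  have "((\<lambda>v. c + w \<bullet> v) has_derivative (\<lambda>h. w \<bullet> h)) (at x)"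
    by (auto intro!: derivative_eq_intros)
  then show ?thesis
    unfolding Q1_grad_dir_def Q1_eval_affine[abs_def]
    by (simp add: frechet_derivative_at[symmetric])
qed

lemma Q1_eq_affine:
  assumes "p (True,True,False) = 0" "p (False,True,True) = 0"
    "p (True,False,True) = 0" "p (True,True,True) = 0"
  shows "p = Q1_affine (p (False,False,False))
                (vector [p (True,False,False), p (False,True,False), p (False,False,True)])"
  using assms by (intro Q1_ext) (simp_all add: Q1_affine_def)


lemma inner_affine_hull_3_eq:
  fixes n A B C v :: "real^3"
  assumes "n \<bullet> (B - A) = 0" "n \<bullet> (C - A) = 0" and "v \<in> affine hull {A, B, C}"
  shows "n \<bullet> (v - A) = 0"
proof -
  have "affine hull {A, B, C} \<subseteq> {x. n \<bullet> x = n \<bullet> A}"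
    using assms(1,2) by (intro hull_minimal affine_hyperplane) (auto simp: inner_diff_right)
  then show ?thesis
    using assms(3) by (auto simp: inner_diff_right)
qed

lemma cross_cross_expand: "cross3 u (cross3 a b) = (u \<bullet> b) *\<^sub>R a - (u \<bullet> a) *\<^sub>R b"
  by (simp add: cross3_simps forall_3)

text \<open>\<open>n\<close> is a nonzero multiple of \<open>cross3 (B - A) (C - A)\<close>, which is also parallel to \<open>u\<close>;
  then \<open>cross3 u n = 0\<close> and \<open>u \<bullet> n = 0\<close> force \<open>u = 0\<close>.\<close>

lemma orthogonal_plane_and_normal_eq_0:
  fixes A B C n u :: "real^3"
  assumes "\<not> collinear {A, B, C}" and "n \<noteq> 0"
    and "n \<bullet> (B - A) = 0" "n \<bullet> (C - A) = 0"
    and "u \<bullet> (B - A) = 0" "u \<bullet> (C - A) = 0" and "u \<bullet> n = 0"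
  shows "u = 0"
proof -
  define m where "m = cross3 (B - A) (C - A)"
  have "m \<noteq> 0"
    using assms(1) collinear_3[of B A C] unfolding m_def by (simp add: cross_eq_0 insert_commute)
  have "cross3 u m = 0" "cross3 n m = 0"
    unfolding m_def using assms by (simp_all add: cross_cross_expand)
  then obtain d where "m = d *\<^sub>R n"
    using \<open>m \<noteq> 0\<close> assms(2) unfolding cross_eq_0 collinear_lemma by blast
  with \<open>cross3 u m = 0\<close> \<open>m \<noteq> 0\<close> have "cross3 u n = 0"
    by (simp add: cross_mult_right)
  then have "(n \<bullet> n) *\<^sub>R u = 0"
    using cross_cross_expand[of n u n] assms(7) by (simp add: inner_commute)
  then show ?thesis
    using assms(2) by simp
qed


lemma CT_rel_swap: "CT_rel a b tau n x p q \<longleftrightarrow> CT_rel b a tau n x q p"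
  unfolding CT_rel_def by auto

lemma CT_rel_exists:
  fixes A B C n :: "real^3"
  assumes "b \<noteq> 0" and "n \<noteq> 0" and "n \<bullet> (B - A) = 0" "n \<bullet> (C - A) = 0"
  shows "\<exists>q. CT_rel a b (affine hull {A, B, C}) n x p q"
proof -
  define c where "c = (a - b) * Q1_grad_dir p x n / (b * (n \<bullet> n))"
  define q where "q = (\<lambda>t. p t + c * Q1_affine (- (n \<bullet> A)) n t)"
  have "Q1_eval q v = Q1_eval p v" if "v \<in> affine hull {A, B, C}" for v
    using inner_affine_hull_3_eq[OF assms(3,4) that]
    unfolding q_def Q1_eval_add_scaled Q1_eval_affine by (simp add: inner_diff_right)
  moreover have "a * Q1_grad_dir p x n = b * Q1_grad_dir q x n"
    using assms(1,2) unfolding q_def Q1_grad_dir_add_scaled Q1_grad_dir_affine c_def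
    by (simp add: field_simps)
  ultimately have "CT_rel a b (affine hull {A, B, C}) n x p q"
    unfolding CT_rel_def by (simp add: q_def Q1_affine_def)
  then show ?thesis by blast
qed

lemma CT_rel_unique:
  fixes A B C n :: "real^3"
  assumes "b \<noteq> 0" and "n \<noteq> 0" and "\<not> collinear {A, B, C}"
    and "n \<bullet> (B - A) = 0" "n \<bullet> (C - A) = 0"
    and q1: "CT_rel a b (affine hull {A, B, C}) n x p q1"
    and q2: "CT_rel a b (affine hull {A, B, C}) n x p q2"
  shows "q1 = q2"
proof -
  define d where "d = (\<lambda>t. q1 t + (- 1) * q2 t)"
  define c0 where "c0 = d (False,False,False)"
  define w :: "real^3" where
    "w = vector [d (True,False,False), d (False,True,False), d (False,False,True)]"
  have d_affine: "d = Q1_affine c0 w"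
    unfolding c0_def w_def using q1 q2 by (intro Q1_eq_affine) (auto simp: d_def CT_rel_def)
  have vanish: "c0 + w \<bullet> v = 0" if "v \<in> affine hull {A, B, C}" for v
  proof -
    have "c0 + w \<bullet> v = Q1_eval d v"
      by (simp add: d_affine Q1_eval_affine)
    also have "\<dots> = Q1_eval q1 v - Q1_eval q2 v"
      unfolding d_def Q1_eval_add_scaled by simp
    also have "\<dots> = 0"
      using q1 q2 that unfolding CT_rel_def by simp
    finally show ?thesis .
  qed
  have "w \<bullet> n = Q1_grad_dir d x n"
    by (simp add: d_affine Q1_grad_dir_affine)
  also have "\<dots> = Q1_grad_dir q1 x n - Q1_grad_dir q2 x n"
    unfolding d_def Q1_grad_dir_add_scaled by simp
  also have "\<dots> = 0"
    using q1 q2 assms(1) unfolding CT_rel_def by simp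
  finally have "w \<bullet> n = 0" .
  moreover have "w \<bullet> (B - A) = 0" "w \<bullet> (C - A) = 0"
    using vanish[of A] vanish[of B] vanish[of C] by (auto simp: hull_inc inner_diff_right)
  ultimately have "w = 0"
    using orthogonal_plane_and_normal_eq_0[OF assms(3,2,4,5)] by blast
  moreover have "c0 = 0"
    using vanish[of A] \<open>w = 0\<close> by (simp add: hull_inc)
  ultimately have "d = (\<lambda>_. 0)"
    by (simp add: d_affine Q1_affine_def fun_eq_iff)
  then show ?thesis
    unfolding d_def by (auto simp: fun_eq_iff dest: fun_cong)
qed

lemma CT_rel_ex1:
  fixes A B C n :: "real^3"
  assumes "b \<noteq> 0" and "n \<noteq> 0" and "\<not> collinear {A, B, C}"
    and "n \<bullet> (B - A) = 0" "n \<bullet> (C - A) = 0"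
  shows "\<exists>!q. CT_rel a b (affine hull {A, B, C}) n x p q"
  using CT_rel_exists[OF assms(1,2,4,5)] CT_rel_unique[OF assms] by blast

theorem theorem3p1:
  fixes A B C nbar :: "real^3" and bm bp :: real
  assumes "0 < bm" and "bm \<le> bp"
    and "\<not> collinear {A, B, C}"
    and "norm nbar = 1" and "nbar \<bullet> (B - A) = 0" and "nbar \<bullet> (C - A) = 0"
  defines "tau \<equiv> affine hull {A, B, C}"
    and "F \<equiv> (1/3) *\<^sub>R (A + B + C)"
  shows "(\<forall>p. \<exists>!q. CT_rel bm bp tau nbar F p q) \<and>
         bij (\<lambda>p. THE q. CT_rel bm bp tau nbar F p q)"
proof -
  have "nbar \<noteq> 0"
    using assms(4) by auto
  then have ex1: "\<exists>!q. CT_rel a b tau nbar F p q" if "b \<noteq> 0" for a b p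
    unfolding tau_def using CT_rel_ex1[OF that _ assms(3,5,6)] by blast
  have "\<exists>!q. CT_rel bm bp tau nbar F p q" for p
    using assms(1,2) by (intro ex1) simp
  moreover have "\<exists>!p. CT_rel bm bp tau nbar F p q" for q
    using assms(1) by (simp only: CT_rel_swap[of bm]) (intro ex1, simp)
  ultimately show ?thesis
    using bij_The_if_ex1_both by blast
qed

end
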